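(* For every positive integer $p$, the number $m(2,p)$ of vertices of $H_\infty(2,p)$ satisfies $m(2,p)=8\sum_{j=1}^p\phi(j)$, where $\phi$ is the Euler totient function (with $\phi(1)=1$).
   Context: For $v\in\mathbb{Z}^2$, $\gcd(v)$ is the largest integer dividing both entries of $v$, and $v\succ0$ means the first nonzero coordinate of $v$ is positive. $H_\infty(2,p)=\sum[0,1]\{v\in\mathbb{Z}^2: \|v\|_\infty\leq p,\ \gcd(v)=1,\ v\succ0\}$, the Minkowski sum of the segments $[0,v]$ over these vectors $v$. $\phi(j)$ counts positive integers less than or equal to $j$ that are relatively prime to $j$. *)

theory Defs
  imports "HOL-Analysis.Analysis" "HOL-Number_Theory.Number_Theory"
begin

definition gens :: "nat \<Rightarrow> (int \<times> int) set" where
  "gens p = {(a, b). \<bar>a\<bar> \<le> int p \<and> \<bar>b\<bar> \<le> int p \<and> gcd a b = 1 \<and> (a > 0 \<or> (a = 0 \<and> b > 0))}"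

definition to_real2 :: "int \<times> int \<Rightarrow> real \<times> real" where
  "to_real2 v = (real_of_int (fst v), real_of_int (snd v))"

definition H_inf2 :: "nat \<Rightarrow> (real \<times> real) set" where
  "H_inf2 p = (\<Sum>v\<in>gens p. closed_segment 0 (to_real2 v))"

definition m2 :: "nat \<Rightarrow> nat" where
  "m2 p = card {x. x extreme_point_of H_inf2 p}"

end

theory Submission
  imports Defs
begin

text \<open>\<open>H\<^sub>\<infinity>(2,p)\<close> is the zonotope generated by the set \<open>G\<close> of primitive vectors. For finitely
  many nonzero generators, the vertices of a zonotope are the sums of the generators on the positive
  side of a functional \<open>a\<close> vanishing on none of them, and two such functionals give the same vertex
  iff they have the same sign pattern on \<open>G\<close>. In the plane, with pairwise non-parallel generators,
  the positive side of a generic \<open>a\<close> within \<open>G \<union> -G\<close> is a vector \<open>w\<close> followed by everything strictly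
  counterclockwise of \<open>w\<close> within a half-turn, and every \<open>w\<close> arises this way; so there are
  \<open>2 |G|\<close> vertices. Finally the primitive vectors of sup-norm \<open>j\<close> in the upper half-plane lie on
  four sides of the square of radius \<open>j\<close>, each side carrying \<open>\<phi>(j)\<close> of them.\<close>

lemma mem_gens_iff:
  "(a, b) \<in> gens p \<longleftrightarrow>
     \<bar>a\<bar> \<le> int p \<and> \<bar>b\<bar> \<le> int p \<and> coprime a b \<and> (0 < a \<or> (a = 0 \<and> 0 < b))"
  by (simp add: gens_def coprime_iff_gcd_eq_1)

definition side_index :: "nat \<Rightarrow> (nat \<times> nat \<times> nat) set" where
  "side_index p = (SIGMA j:{1..p}. {0..<4} \<times> totatives j)"

text \<open>Side \<open>i\<close> of the square of radius \<open>j\<close>, its points parametrised by the totative \<open>k\<close> of \<open>j\<close>.\<close>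
definition boundary_vector :: "nat \<times> nat \<times> nat \<Rightarrow> int \<times> int" where
  "boundary_vector = (\<lambda>(j, i, k).
     if i = 0 then (int j, int k)
     else if i = 1 then (int j, int k - int j)
     else if i = 2 then (int j - int k, int j)
     else (int k, - int j))"

lemma card_side_index: "card (side_index p) = 4 * (\<Sum>j=1..p. totient j)"
  unfolding side_index_def
  by (subst card_SigmaI) (auto simp: card_cartesian_product totient_def sum_distrib_left)

lemma inj_on_boundary_vector: "inj_on boundary_vector (side_index p)"
  by (rule inj_onI) (auto simp: side_index_def totatives_def boundary_vector_def split: if_splits)

lemma boundary_vector_in_gens:
  assumes "x \<in> side_index p"
  shows "boundary_vector x \<in> gens p"
proof -
  obtain j i k where x: "x = (j, i, k)" by (cases x)
  have bounds: "1 \<le> j" "j \<le> p" "i < 4" "0 < k" "k \<le> j" and "coprime k j"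
    using assms unfolding x side_index_def totatives_def by auto
  then have kj: "coprime (int k) (int j)" by simp
  have cop: "coprime (int j) (int k)" "coprime (int j) (int k - int j)"
    "coprime (int j - int k) (int j)"
    using kj by (metis coprime_commute, metis coprime_commute coprime_iff_gcd_eq_1 gcd_diff1,
        metis coprime_iff_gcd_eq_1 gcd_diff2)
  from \<open>i < 4\<close> consider "i = 0" | "i = 1" | "i = 2" | "i = 3" by linarith
  then show ?thesis
    by cases (use bounds kj cop in \<open>auto simp: x boundary_vector_def mem_gens_iff\<close>)
qed

lemma gens_subset_boundary_vector_image: "gens p \<subseteq> boundary_vector ` side_index p"
proof
  fix v assume "v \<in> gens p"
  then obtain a b where v: "v = (a, b)" and abs_le: "\<bar>a\<bar> \<le> int p" "\<bar>b\<bar> \<le> int p"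
    and cop: "coprime a b" and pos: "0 < a \<or> (a = 0 \<and> 0 < b)"
    by (cases v) (auto simp: mem_gens_iff)
  define j where "j = nat (max \<bar>a\<bar> \<bar>b\<bar>)"
  have j_eq: "int j = max \<bar>a\<bar> \<bar>b\<bar>" unfolding j_def by simp
  have j: "1 \<le> j" "j \<le> p" using abs_le pos j_eq by auto
  have in_image: "v \<in> boundary_vector ` side_index p"
    if "v = boundary_vector (j, i, nat k)" "i < 4" "0 < k" "k \<le> int j" "coprime k (int j)" for i k
  proof -
    have "coprime (nat k) j" using that by (metis coprime_int_iff int_nat_eq order_less_le)
    then have "(j, i, nat k) \<in> side_index p"
      using that j unfolding side_index_def totatives_def by auto
    then show ?thesis using that(1) by blast
  qed
  have le_j: "\<bar>a\<bar> \<le> int j" "\<bar>b\<bar> \<le> int j" using j_eq by auto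
  consider "a = int j" "0 < b" | "a = int j" "b \<le> 0" "- int j < b" | "0 \<le> a" "a < int j" "b = int j"
    | "0 < a" "b = - int j"
    using pos j_eq by linarith
  then show "v \<in> boundary_vector ` side_index p"
  proof cases
    case 1
    with cop have "coprime b (int j)" by (metis coprime_commute)
    with 1 le_j show ?thesis by (intro in_image[of 0 b]) (auto simp: v boundary_vector_def)
  next
    case 2
    with cop have "coprime (b + int j) (int j)"
      by (metis coprime_commute coprime_iff_gcd_eq_1 gcd_add1)
    with 2 show ?thesis by (intro in_image[of 1 "b + int j"]) (auto simp: v boundary_vector_def)
  next
    case 3
    with cop have "coprime (int j - a) (int j)" by (metis coprime_iff_gcd_eq_1 gcd_diff2)
    with 3 show ?thesis by (intro in_image[of 2 "int j - a"]) (auto simp: v boundary_vector_def)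
  next
    case 4
    with cop have "coprime a (int j)" by simp
    with 4 le_j show ?thesis by (intro in_image[of 3 a]) (auto simp: v boundary_vector_def)
  qed
qed

lemma card_gens: "card (gens p) = 4 * (\<Sum>j=1..p. totient j)"
proof -
  have "gens p = boundary_vector ` side_index p"
    using boundary_vector_in_gens gens_subset_boundary_vector_image by blast
  then show ?thesis
    using card_image[OF inj_on_boundary_vector] card_side_index by simp
qed

definition zonotope :: "'a::real_vector set \<Rightarrow> 'a set" where
  "zonotope G = (\<Sum>v\<in>G. closed_segment 0 v)"

lemma zonotope_eq:
  assumes "finite G"
  shows "zonotope G = {\<Sum>v\<in>G. t v *\<^sub>R v | t. \<forall>v\<in>G. 0 \<le> t v \<and> t v \<le> 1}"
  unfolding zonotope_def using assms
proof (induction G rule: finite_induct)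
  case empty
  then show ?case by auto
next
  case (insert x F)
  have seg: "closed_segment 0 x = {u *\<^sub>R x | u. 0 \<le> u \<and> u \<le> 1}"
    by (auto simp: closed_segment_def)
  show ?case
  proof (intro equalityI subsetI)
    fix z assume "z \<in> (\<Sum>v\<in>insert x F. closed_segment 0 v)"
    then obtain u t where z: "z = u *\<^sub>R x + (\<Sum>v\<in>F. t v *\<^sub>R v)" and "0 \<le> u" "u \<le> 1"
      and t: "\<forall>v\<in>F. 0 \<le> t v \<and> t v \<le> 1"
      using insert by (auto simp: set_plus_def seg)
    moreover have "(\<Sum>v\<in>F. t v *\<^sub>R v) = (\<Sum>v\<in>F. (t(x := u)) v *\<^sub>R v)"
      using insert by (intro sum.cong) auto
    ultimately have "z = (\<Sum>v\<in>insert x F. (t(x := u)) v *\<^sub>R v)"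
      using insert by simp
    moreover have "\<forall>v\<in>insert x F. 0 \<le> (t(x := u)) v \<and> (t(x := u)) v \<le> 1"
      using t \<open>0 \<le> u\<close> \<open>u \<le> 1\<close> by auto
    ultimately show "z \<in> {\<Sum>v\<in>insert x F. t v *\<^sub>R v | t. \<forall>v\<in>insert x F. 0 \<le> t v \<and> t v \<le> 1}"
      by blast
  next
    fix z assume "z \<in> {\<Sum>v\<in>insert x F. t v *\<^sub>R v | t. \<forall>v\<in>insert x F. 0 \<le> t v \<and> t v \<le> 1}"
    then obtain t where "z = t x *\<^sub>R x + (\<Sum>v\<in>F. t v *\<^sub>R v)"
      and "\<forall>v\<in>insert x F. 0 \<le> t v \<and> t v \<le> 1"
      using insert by auto
    then show "z \<in> (\<Sum>v\<in>insert x F. closed_segment 0 v)"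
      using insert by (auto simp: set_plus_def seg)
  qed
qed

lemma polytope_zonotope:
  fixes G :: "'a::euclidean_space set"
  assumes "finite G"
  shows "polytope (zonotope G)"
proof -
  have "zonotope G = convex hull (\<Sum>v\<in>G. {0, v})"
    by (simp add: zonotope_def segment_convex_hull convex_hull_set_sum)
  moreover have "finite (\<Sum>v\<in>G. {0, v})"
    using assms by (induction G rule: finite_induct) (auto intro: finite_set_plus)
  ultimately show ?thesis
    unfolding polytope_def by blast
qed

definition zonotope_vertex :: "'a::real_inner set \<Rightarrow> 'a \<Rightarrow> 'a" where
  "zonotope_vertex G a = (\<Sum>v\<in>G. (if 0 < a \<bullet> v then 1 else 0) *\<^sub>R v)"

lemma zonotope_vertex_in_zonotope:
  assumes "finite G"
  shows "zonotope_vertex G a \<in> zonotope G"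
  unfolding zonotope_eq[OF assms] zonotope_vertex_def by force

lemma inner_le_inner_zonotope_vertex:
  assumes "\<forall>v\<in>G. 0 \<le> t v \<and> t v \<le> 1"
  shows "a \<bullet> (\<Sum>v\<in>G. t v *\<^sub>R v) \<le> a \<bullet> zonotope_vertex G a"
proof -
  have "t v * (a \<bullet> v) \<le> (if 0 < a \<bullet> v then 1 else 0) * (a \<bullet> v)" if "v \<in> G" for v
    using assms that by (auto simp: mult_le_cancel_right1 mult_nonneg_nonpos)
  then show ?thesis
    unfolding zonotope_vertex_def inner_sum_right by (intro sum_mono) simp
qed

lemma coeffs_eq_if_inner_eq_inner_zonotope_vertex:
  assumes "finite G" "\<forall>v\<in>G. a \<bullet> v \<noteq> 0" "\<forall>v\<in>G. 0 \<le> t v \<and> t v \<le> 1"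
    and "a \<bullet> (\<Sum>v\<in>G. t v *\<^sub>R v) = a \<bullet> zonotope_vertex G a"
  shows "\<forall>v\<in>G. t v = (if 0 < a \<bullet> v then 1 else 0)"
proof
  define gap where "gap v = ((if 0 < a \<bullet> v then 1 else 0) - t v) * (a \<bullet> v)" for v
  have "gap v \<ge> 0" if "v \<in> G" for v
    using assms(3) that unfolding gap_def by (auto simp: mult_nonneg_nonpos)
  moreover have "(\<Sum>v\<in>G. gap v) = 0"
    using assms(4) unfolding gap_def zonotope_vertex_def inner_sum_right
    by (simp add: left_diff_distrib sum_subtractf)
  ultimately have "\<forall>v\<in>G. gap v = 0"
    using assms(1) sum_nonneg_eq_0_iff by blast
  then show "t v = (if 0 < a \<bullet> v then 1 else 0)" if "v \<in> G" for v
    using assms(2) that unfolding gap_def by auto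
qed

lemma zonotope_vertex_unique_maximizer:
  assumes "finite G" "\<forall>v\<in>G. a \<bullet> v \<noteq> 0"
  shows "zonotope G \<subseteq> {y. a \<bullet> y \<le> a \<bullet> zonotope_vertex G a}"
    and "zonotope G \<inter> {y. a \<bullet> y = a \<bullet> zonotope_vertex G a} = {zonotope_vertex G a}"
proof -
  show "zonotope G \<subseteq> {y. a \<bullet> y \<le> a \<bullet> zonotope_vertex G a}"
    unfolding zonotope_eq[OF assms(1)] using inner_le_inner_zonotope_vertex by blast
  have "y = zonotope_vertex G a"
    if y_in: "y \<in> zonotope G" and y_max: "a \<bullet> y = a \<bullet> zonotope_vertex G a" for y
  proof -
    obtain t where y: "y = (\<Sum>v\<in>G. t v *\<^sub>R v)" and t: "\<forall>v\<in>G. 0 \<le> t v \<and> t v \<le> 1"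
      using y_in unfolding zonotope_eq[OF assms(1)] by blast
    have "\<forall>v\<in>G. t v = (if 0 < a \<bullet> v then 1 else 0)"
      using coeffs_eq_if_inner_eq_inner_zonotope_vertex[OF assms t] y_max y by blast
    then show ?thesis
      unfolding y zonotope_vertex_def by (intro sum.cong) auto
  qed
  then show "zonotope G \<inter> {y. a \<bullet> y = a \<bullet> zonotope_vertex G a} = {zonotope_vertex G a}"
    using zonotope_vertex_in_zonotope[OF assms(1)] by blast
qed

lemma zonotope_not_exposed_by_degenerate_functional:
  assumes "finite G" "v \<in> G" "v \<noteq> 0" "a \<bullet> v = 0" "x \<in> zonotope G"
  obtains y where "y \<in> zonotope G" "y \<noteq> x" "a \<bullet> y = a \<bullet> x"
proof -
  obtain t where x: "x = (\<Sum>w\<in>G. t w *\<^sub>R w)" and t: "\<forall>w\<in>G. 0 \<le> t w \<and> t w \<le> 1"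
    using assms(5) unfolding zonotope_eq[OF assms(1)] by blast
  define d :: real where "d = (if t v \<le> 1/2 then 1/2 else -1/2)"
  define t' where "t' = t(v := t v + d)"
  have "(\<Sum>w\<in>G. t' w *\<^sub>R w) = t' v *\<^sub>R v + (\<Sum>w\<in>G - {v}. t w *\<^sub>R w)"
    using assms(1,2) by (simp add: sum.remove t'_def)
  also have "\<dots> = x + d *\<^sub>R v"
    using assms(1,2) by (simp add: x sum.remove t'_def scaleR_add_left)
  finally have y: "(\<Sum>w\<in>G. t' w *\<^sub>R w) = x + d *\<^sub>R v" .
  have t': "\<forall>w\<in>G. 0 \<le> t' w \<and> t' w \<le> 1"
    using t assms(2) by (auto simp: t'_def d_def)
  show ?thesis
  proof (rule that)
    show "x + d *\<^sub>R v \<in> zonotope G"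
      unfolding y[symmetric] zonotope_eq[OF assms(1)] using t' by blast
    show "x + d *\<^sub>R v \<noteq> x" using assms(3) by (simp add: d_def)
    show "a \<bullet> (x + d *\<^sub>R v) = a \<bullet> x" using assms(4) by (simp add: inner_add_right)
  qed
qed

lemma extreme_points_zonotope:
  fixes G :: "'a::euclidean_space set"
  assumes "finite G" "0 \<notin> G"
  shows "{x. x extreme_point_of zonotope G} = zonotope_vertex G ` {a. \<forall>v\<in>G. a \<bullet> v \<noteq> 0}"
proof (intro equalityI subsetI)
  fix x assume "x \<in> {x. x extreme_point_of zonotope G}"
  then have "{x} face_of zonotope G"
    by (simp add: face_of_singleton)
  then have "{x} exposed_face_of zonotope G"
    using exposed_face_of_polyhedron polytope_imp_polyhedron polytope_zonotope[OF assms(1)]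
    by blast
  then obtain a b where below: "zonotope G \<subseteq> {y. a \<bullet> y \<le> b}"
    and face: "{x} = zonotope G \<inter> {y. a \<bullet> y = b}"
    unfolding exposed_face_of_def by blast
  have x: "x \<in> zonotope G" "a \<bullet> x = b"
    using face by blast+
  have only_x: "y = x" if "y \<in> zonotope G" "a \<bullet> y = b" for y
    using face that by blast
  have generic: "\<forall>v\<in>G. a \<bullet> v \<noteq> 0"
  proof (intro ballI notI)
    fix v assume v: "v \<in> G" "a \<bullet> v = 0"
    then have "v \<noteq> 0" using assms(2) by auto
    then obtain y where "y \<in> zonotope G" "y \<noteq> x" "a \<bullet> y = a \<bullet> x"
      by (rule zonotope_not_exposed_by_degenerate_functional[OF assms(1) v(1) _ v(2) x(1)])
    then show False using only_x[of y] x(2) by metis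
  qed
  have "a \<bullet> zonotope_vertex G a \<le> b"
    using below zonotope_vertex_in_zonotope[OF assms(1)] by blast
  moreover have "b \<le> a \<bullet> zonotope_vertex G a"
    using x zonotope_vertex_unique_maximizer(1)[OF assms(1) generic] by blast
  ultimately have "zonotope_vertex G a = x"
    by (intro only_x zonotope_vertex_in_zonotope assms(1)) simp
  then show "x \<in> zonotope_vertex G ` {a. \<forall>v\<in>G. a \<bullet> v \<noteq> 0}"
    using generic by force
next
  fix x assume "x \<in> zonotope_vertex G ` {a. \<forall>v\<in>G. a \<bullet> v \<noteq> 0}"
  then obtain a where generic: "\<forall>v\<in>G. a \<bullet> v \<noteq> 0" and x: "x = zonotope_vertex G a"
    by blast
  note maximizer = zonotope_vertex_unique_maximizer[OF assms(1) generic]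
  have "(zonotope G \<inter> {y. a \<bullet> y = a \<bullet> zonotope_vertex G a}) exposed_face_of zonotope G"
    using maximizer(1)
    by (intro exposed_face_of_Int_supporting_hyperplane_le polytope_imp_convex
        polytope_zonotope assms(1)) blast
  then have "{x} face_of zonotope G"
    unfolding x maximizer(2) exposed_face_of_def by blast
  then show "x \<in> {x. x extreme_point_of zonotope G}"
    by (simp add: face_of_singleton)
qed

lemma zonotope_vertex_eq_iff:
  assumes "finite G" "\<forall>v\<in>G. a \<bullet> v \<noteq> 0"
  shows "zonotope_vertex G a = zonotope_vertex G b \<longleftrightarrow> (\<forall>v\<in>G. 0 < a \<bullet> v \<longleftrightarrow> 0 < b \<bullet> v)"
proof
  assume "zonotope_vertex G a = zonotope_vertex G b"
  then have "\<forall>v\<in>G. (if 0 < b \<bullet> v then 1 else 0 :: real) = (if 0 < a \<bullet> v then 1 else 0)"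
    by (intro coeffs_eq_if_inner_eq_inner_zonotope_vertex[OF assms]) (auto simp: zonotope_vertex_def)
  then show "\<forall>v\<in>G. 0 < a \<bullet> v \<longleftrightarrow> 0 < b \<bullet> v"
    by (metis zero_neq_one)
qed (auto simp: zonotope_vertex_def intro: sum.cong)

lemma card_image_eq_card_image:
  assumes "\<And>x y. x \<in> A \<Longrightarrow> y \<in> A \<Longrightarrow> f x = f y \<longleftrightarrow> g x = g y"
  shows "card (f ` A) = card (g ` A)"
proof -
  define h where "h z = f (inv_into A g z)" for z
  have "h (g x) = f x" if "x \<in> A" for x
    using assms that by (simp add: h_def inv_into_into f_inv_into_f)
  then have "f ` A = h ` g ` A"
    by (simp add: image_image cong: image_cong)
  moreover have "inj_on h (g ` A)"
    by (rule inj_onI) (auto simp: h_def assms inv_into_into f_inv_into_f)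
  ultimately show ?thesis
    by (simp add: card_image)
qed

lemma small_positive_scalar:
  fixes c d :: "'a \<Rightarrow> real"
  assumes "finite S" "\<forall>y\<in>S. 0 < c y"
  obtains e where "0 < e" "\<forall>y\<in>S. e * d y < c y"
proof -
  have "\<forall>\<^sub>F e in at_right 0. \<forall>y\<in>S. e * d y < c y"
    using assms by (intro eventually_ball_finite ballI order_tendstoD(2))
      (auto intro!: tendsto_eq_intros)
  moreover have "\<forall>\<^sub>F e in at_right (0::real). 0 < e"
    by (rule eventually_at_right_less)
  ultimately have "\<exists>e. 0 < e \<and> (\<forall>y\<in>S. e * d y < c y)"
    by (intro eventually_happens'[of "at_right 0"]) (auto elim: eventually_conj)
  then show ?thesis using that by blast
qed

definition det2 :: "real \<times> real \<Rightarrow> real \<times> real \<Rightarrow> real" where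
  "det2 x y = fst x * snd y - snd x * fst y"

lemma det2_minus_left [simp]: "det2 (- x) y = - det2 x y"
  and det2_minus_right [simp]: "det2 x (- y) = - det2 x y"
  and det2_self [simp]: "det2 x x = 0"
  by (auto simp: det2_def)

lemma det2_commute: "det2 y x = - det2 x y"
  by (simp add: det2_def)

lemma inner_real_pair: "x \<bullet> y = fst x * fst y + snd x * snd y" for x y :: "real \<times> real"
  by (simp add: inner_prod_def)

lemma det2_eq_slope_difference:
  assumes "a \<bullet> w \<noteq> 0" "a \<bullet> y \<noteq> 0"
  shows "det2 w y * (a \<bullet> a) = (a \<bullet> w) * (a \<bullet> y) * (det2 a y / (a \<bullet> y) - det2 a w / (a \<bullet> w))"
proof -
  have expand: "det2 w y * (a \<bullet> a) = (a \<bullet> w) * det2 a y - det2 a w * (a \<bullet> y)"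
    by (simp add: det2_def inner_real_pair algebra_simps)
  show ?thesis
    unfolding expand using assms by (simp add: field_simps)
qed

locale plane_generators =
  fixes G :: "(real \<times> real) set"
  assumes finite_G: "finite G" and G_nonempty: "G \<noteq> {}" and zero_notin_G: "0 \<notin> G"
    and det2_eq_0_imp_eq: "\<And>u v. u \<in> G \<Longrightarrow> v \<in> G \<Longrightarrow> det2 u v = 0 \<Longrightarrow> u = v"
begin

definition signed :: "(real \<times> real) set" where
  "signed = G \<union> uminus ` G"

definition positive_part :: "real \<times> real \<Rightarrow> (real \<times> real) set" where
  "positive_part a = {w \<in> signed. 0 < a \<bullet> w}"

definition left_half :: "real \<times> real \<Rightarrow> (real \<times> real) set" where
  "left_half w = {y \<in> signed. y = w \<or> 0 < det2 w y}"

lemma finite_signed: "finite signed"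
  using finite_G by (simp add: signed_def)

lemma uminus_in_signed: "w \<in> signed \<Longrightarrow> - w \<in> signed"
  by (auto simp: signed_def image_iff)

lemma signed_cases:
  assumes "w \<in> signed"
  obtains "w \<in> G" | "- w \<in> G"
  using assms by (auto simp: signed_def)

lemma nonzero_if_signed: "w \<in> signed \<Longrightarrow> w \<noteq> 0"
  by (cases rule: signed_cases) (use zero_notin_G in auto)

lemma uminus_notin_G:
  assumes "v \<in> G"
  shows "- v \<notin> G"
proof
  assume "- v \<in> G"
  then have "v = - v"
    using assms det2_eq_0_imp_eq[of v "- v"] by simp
  then have "v = 0"
    by (simp add: prod_eq_iff)
  then show False
    using assms zero_notin_G by simp
qed

lemma card_signed: "card signed = 2 * card G"
proof -
  have "card signed = card G + card (uminus ` G)"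
    unfolding signed_def using finite_G uminus_notin_G by (intro card_Un_disjoint) auto
  then show ?thesis
    by (simp add: card_image)
qed

lemma signed_det2_eq_0:
  assumes "w \<in> signed" "y \<in> signed" "det2 w y = 0"
  shows "y = w \<or> y = - w"
proof -
  from assms(1,2) consider "w \<in> G" "y \<in> G" | "w \<in> G" "- y \<in> G" | "- w \<in> G" "y \<in> G"
    | "- w \<in> G" "- y \<in> G"
    by (auto elim!: signed_cases)
  then show ?thesis
  proof cases
    case 1
    then show ?thesis using det2_eq_0_imp_eq[of w y] assms(3) by auto
  next
    case 2
    then show ?thesis using det2_eq_0_imp_eq[of w "- y"] assms(3) by auto
  next
    case 3
    then show ?thesis using det2_eq_0_imp_eq[of "- w" y] assms(3) by auto
  next
    case 4
    then show ?thesis using det2_eq_0_imp_eq[of "- w" "- y"] assms(3) by auto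
  qed
qed

lemma inner_nonzero_if_signed:
  assumes "\<forall>v\<in>G. a \<bullet> v \<noteq> 0" "w \<in> signed"
  shows "a \<bullet> w \<noteq> 0"
  using assms(2) by (cases rule: signed_cases) (use bspec[OF assms(1)] in fastforce)+

lemma inj_on_left_half: "inj_on left_half signed"
proof (rule inj_onI, rule ccontr)
  fix w y assume "w \<in> signed" "y \<in> signed" "left_half w = left_half y" "w \<noteq> y"
  then have "y \<in> left_half w" "w \<in> left_half y"
    by (auto simp: left_half_def)
  then have "0 < det2 w y" "0 < det2 y w"
    using \<open>w \<noteq> y\<close> by (auto simp: left_half_def)
  then show False
    by (simp add: det2_commute[of y w])
qed

text \<open>On the positive side of \<open>a\<close> the slope \<open>det2 a y / (a \<bullet> y)\<close> increases counterclockwise,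
  so the positive part starts at a vector of minimal slope.\<close>
lemma positive_part_eq_left_half_if_min_slope:
  assumes generic: "\<forall>v\<in>G. a \<bullet> v \<noteq> 0" and w: "w \<in> positive_part a"
    and w_min: "\<And>y. y \<in> positive_part a \<Longrightarrow> det2 a w / (a \<bullet> w) \<le> det2 a y / (a \<bullet> y)"
  shows "positive_part a = left_half w"
proof -
  have w_signed: "w \<in> signed" and aw: "0 < a \<bullet> w"
    using w by (auto simp: positive_part_def)
  then have "a \<noteq> 0"
    by auto
  then have a_nonzero: "0 < a \<bullet> a"
    by simp
  have "y \<in> positive_part a \<longleftrightarrow> y \<in> left_half w" if y: "y \<in> signed" for y
  proof (cases "0 < a \<bullet> y")
    case True
    then have "y \<in> positive_part a" using y by (simp add: positive_part_def)
    then have "0 \<le> det2 w y * (a \<bullet> a)"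
      unfolding det2_eq_slope_difference[OF aw[THEN less_imp_neq, symmetric]
          True[THEN less_imp_neq, symmetric]]
      using w_min[of y] aw True by (intro mult_nonneg_nonneg) simp_all
    then have "0 \<le> det2 w y"
      using a_nonzero by (simp add: zero_le_mult_iff)
    moreover have "det2 w y \<noteq> 0 \<or> y = w"
      using signed_det2_eq_0[OF w_signed y] aw True by force
    ultimately show ?thesis
      using y True by (auto simp: positive_part_def left_half_def)
  next
    case False
    then have neg: "0 < a \<bullet> (- y)"
      using inner_nonzero_if_signed[OF generic y] by simp
    then have "- y \<in> positive_part a"
      using uminus_in_signed[OF y] by (simp add: positive_part_def)
    then have "0 \<le> det2 w (- y) * (a \<bullet> a)"
      unfolding det2_eq_slope_difference[OF aw[THEN less_imp_neq, symmetric]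
          neg[THEN less_imp_neq, symmetric]]
      using w_min[of "- y"] aw neg by (intro mult_nonneg_nonneg) simp_all
    then have "det2 w y \<le> 0"
      using a_nonzero by (simp add: mult_le_0_iff del: inner_gt_zero_iff)
    moreover have "y \<noteq> w" using False aw by auto
    ultimately show ?thesis
      using False by (auto simp: positive_part_def left_half_def)
  qed
  then show ?thesis
    using w_signed unfolding positive_part_def left_half_def by blast
qed

lemma positive_part_eq_left_half:
  assumes generic: "\<forall>v\<in>G. a \<bullet> v \<noteq> 0"
  obtains w where "w \<in> signed" "positive_part a = left_half w"
proof -
  obtain v where v: "v \<in> G" using G_nonempty by blast
  then have "v \<in> signed" "- v \<in> signed" "a \<bullet> v \<noteq> 0"
    using generic by (auto simp: signed_def)
  then have "v \<in> positive_part a \<or> - v \<in> positive_part a"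
    by (auto simp: positive_part_def)
  then have "positive_part a \<noteq> {}"
    by blast
  moreover have "finite (positive_part a)"
    using finite_signed by (simp add: positive_part_def)
  ultimately obtain w where "is_arg_min (\<lambda>x. det2 a x / (a \<bullet> x)) (\<lambda>x. x \<in> positive_part a) w"
    using ex_is_arg_min_if_finite[of "positive_part a"] by blast
  then have w: "w \<in> positive_part a"
    and w_min: "\<And>y. y \<in> positive_part a \<Longrightarrow> det2 a w / (a \<bullet> w) \<le> det2 a y / (a \<bullet> y)"
    by (auto simp: is_arg_min_linorder)
  show ?thesis
    by (rule that) (use w positive_part_eq_left_half_if_min_slope[OF generic w w_min] in
        \<open>auto simp: positive_part_def\<close>)
qed

text \<open>For small \<open>e > 0\<close> the functional \<open>e w + w\<^sup>\<perp>\<close> has the sign of \<open>det2 w\<close> away from the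
  line through \<open>w\<close>, and is positive on \<open>w\<close> itself.\<close>
lemma left_half_eq_positive_part:
  assumes w: "w \<in> signed"
  obtains a where "\<forall>v\<in>G. a \<bullet> v \<noteq> 0" "positive_part a = left_half w"
proof -
  define S where "S = {y \<in> signed. det2 w y \<noteq> 0}"
  have "finite S" "\<forall>y\<in>S. 0 < \<bar>det2 w y\<bar>"
    using finite_signed by (auto simp: S_def)
  then obtain e where e: "0 < e" "\<forall>y\<in>S. e * \<bar>w \<bullet> y\<bar> < \<bar>det2 w y\<bar>"
    by (rule small_positive_scalar)
  define a where "a = e *\<^sub>R w + (- snd w, fst w)"
  have a_inner: "a \<bullet> y = e * (w \<bullet> y) + det2 w y" for y
    by (simp add: a_def inner_real_pair det2_def algebra_simps)
  have "0 < e * (w \<bullet> w)"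
    using nonzero_if_signed[OF w] e(1) by simp
  have sign: "a \<bullet> y \<noteq> 0 \<and> (0 < a \<bullet> y \<longleftrightarrow> y = w \<or> 0 < det2 w y)" if y: "y \<in> signed" for y
  proof (cases "det2 w y = 0")
    case True
    have "y \<noteq> - y"
      using nonzero_if_signed[OF y] by (simp add: prod_eq_iff)
    from True consider "y = w" | "y = - w" "y \<noteq> w"
      using signed_det2_eq_0[OF w y] \<open>y \<noteq> - y\<close> by blast
    then show ?thesis
    proof cases
      case 1
      then have "0 < a \<bullet> y" using a_inner[of y] \<open>0 < e * (w \<bullet> w)\<close> by simp
      with 1 show ?thesis by simp
    next
      case 2
      then have "a \<bullet> y < 0" using a_inner[of y] \<open>0 < e * (w \<bullet> w)\<close> by simp
      with 2 True show ?thesis by auto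
    qed
  next
    case False
    with y have "y \<in> S" by (simp add: S_def)
    then have "\<bar>e * (w \<bullet> y)\<bar> < \<bar>det2 w y\<bar>"
      using bspec[OF e(2)] e(1) by (simp add: abs_mult)
    then have "a \<bullet> y \<noteq> 0 \<and> (0 < a \<bullet> y \<longleftrightarrow> 0 < det2 w y)"
      unfolding a_inner by arith
    moreover have "y \<noteq> w" using False by auto
    ultimately show ?thesis
      by blast
  qed
  show ?thesis
  proof (rule that)
    show "\<forall>v\<in>G. a \<bullet> v \<noteq> 0"
      using sign by (simp add: signed_def)
    show "positive_part a = left_half w"
      unfolding positive_part_def left_half_def using sign by (intro Collect_cong) blast
  qed
qed

lemma positive_part_eq_iff:
  assumes "\<forall>v\<in>G. a \<bullet> v \<noteq> 0" "\<forall>v\<in>G. b \<bullet> v \<noteq> 0"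
  shows "positive_part a = positive_part b \<longleftrightarrow> (\<forall>v\<in>G. 0 < a \<bullet> v \<longleftrightarrow> 0 < b \<bullet> v)"
proof
  assume eq: "positive_part a = positive_part b"
  show "\<forall>v\<in>G. 0 < a \<bullet> v \<longleftrightarrow> 0 < b \<bullet> v"
  proof
    fix v assume "v \<in> G"
    then have "v \<in> signed" by (simp add: signed_def)
    then show "0 < a \<bullet> v \<longleftrightarrow> 0 < b \<bullet> v"
      using eqset_imp_iff[OF eq, of v] by (simp add: positive_part_def)
  qed
next
  assume same: "\<forall>v\<in>G. 0 < a \<bullet> v \<longleftrightarrow> 0 < b \<bullet> v"
  have "0 < a \<bullet> w \<longleftrightarrow> 0 < b \<bullet> w" if w: "w \<in> signed" for w
    using w
  proof (cases rule: signed_cases)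
    case 1
    then show ?thesis using same by blast
  next
    case 2
    then have "0 < a \<bullet> (- w) \<longleftrightarrow> 0 < b \<bullet> (- w)"
      using same by blast
    moreover have "a \<bullet> w \<noteq> 0" "b \<bullet> w \<noteq> 0"
      using inner_nonzero_if_signed[OF _ w] assms by blast+
    ultimately show ?thesis
      by auto
  qed
  then show "positive_part a = positive_part b"
    unfolding positive_part_def by (intro Collect_cong) blast
qed

lemma card_zonotope_vertices:
  "card (zonotope_vertex G ` {a. \<forall>v\<in>G. a \<bullet> v \<noteq> 0}) = 2 * card G"
proof -
  have "card (zonotope_vertex G ` {a. \<forall>v\<in>G. a \<bullet> v \<noteq> 0})
      = card (positive_part ` {a. \<forall>v\<in>G. a \<bullet> v \<noteq> 0})"
    by (rule card_image_eq_card_image)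
      (simp add: zonotope_vertex_eq_iff[OF finite_G] positive_part_eq_iff)
  also have "positive_part ` {a. \<forall>v\<in>G. a \<bullet> v \<noteq> 0} = left_half ` signed"
  proof (intro equalityI subsetI)
    fix S assume "S \<in> positive_part ` {a. \<forall>v\<in>G. a \<bullet> v \<noteq> 0}"
    then obtain a where a: "\<forall>v\<in>G. a \<bullet> v \<noteq> 0" and S: "S = positive_part a"
      by blast
    obtain w where "w \<in> signed" "positive_part a = left_half w"
      by (rule positive_part_eq_left_half[OF a])
    then show "S \<in> left_half ` signed"
      unfolding S by blast
  next
    fix S assume "S \<in> left_half ` signed"
    then obtain w where w: "w \<in> signed" and S: "S = left_half w"
      by blast
    obtain a where "\<forall>v\<in>G. a \<bullet> v \<noteq> 0" "positive_part a = left_half w"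
      by (rule left_half_eq_positive_part[OF w])
    then show "S \<in> positive_part ` {a. \<forall>v\<in>G. a \<bullet> v \<noteq> 0}"
      unfolding S by force
  qed
  also have "card (left_half ` signed) = 2 * card G"
    by (simp add: card_image inj_on_left_half card_signed)
  finally show ?thesis .
qed

lemma card_extreme_points_zonotope:
  "card {x. x extreme_point_of zonotope G} = 2 * card G"
  using extreme_points_zonotope[OF finite_G zero_notin_G] card_zonotope_vertices by simp

end

lemma finite_gens: "finite (gens p)"
proof -
  have "gens p \<subseteq> {- int p..int p} \<times> {- int p..int p}"
    by (auto simp: gens_def)
  then show ?thesis
    by (rule finite_subset) simp
qed

lemma gens_det_eq_0_imp_eq:
  assumes "(a, b) \<in> gens p" "(c, d) \<in> gens p" "a * d - b * c = 0"
  shows "(a, b) = (c, d)"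
proof -
  have ab: "coprime a b" "0 < a \<or> (a = 0 \<and> 0 < b)"
    and cd: "coprime c d" "0 < c \<or> (c = 0 \<and> 0 < d)"
    using assms(1,2) by (simp_all add: mem_gens_iff)
  have "a * d = b * c" using assms(3) by simp
  then have "a dvd c" "c dvd a"
    using ab(1) cd(1) by (metis coprime_dvd_mult_right_iff dvd_triv_left dvd_triv_right
        coprime_dvd_mult_left_iff)+
  then have "a = c"
    using ab(2) cd(2) zdvd_antisym_abs[of a c] by auto
  show ?thesis
  proof (cases "a = 0")
    case True
    then have "\<bar>b\<bar> = 1" "\<bar>d\<bar> = 1"
      using ab(1) cd(1) \<open>a = c\<close> by (simp_all add: zdvd1_eq)
    then show ?thesis
      using True ab(2) cd(2) \<open>a = c\<close> by auto
  next
    case False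
    then show ?thesis
      using \<open>a * d = b * c\<close> \<open>a = c\<close> by (simp add: mult.commute)
  qed
qed

lemma inj_to_real2: "inj to_real2"
  by (rule injI) (auto simp: to_real2_def prod_eq_iff)

lemma det2_to_real2:
  "det2 (to_real2 (a, b)) (to_real2 (c, d)) = real_of_int (a * d - b * c)"
  by (simp add: det2_def to_real2_def)

lemma plane_generators_gens:
  assumes "1 \<le> p"
  shows "plane_generators (to_real2 ` gens p)"
proof
  show "finite (to_real2 ` gens p)"
    using finite_gens by simp
  have "(1, 0) \<in> gens p"
    using assms by (simp add: mem_gens_iff)
  then show "to_real2 ` gens p \<noteq> {}"
    by blast
  have "to_real2 v \<noteq> 0" if "v \<in> gens p" for v
    using that by (cases v) (auto simp: to_real2_def mem_gens_iff zero_prod_def)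
  then show "0 \<notin> to_real2 ` gens p"
    by (metis imageE)
  show "x = y"
    if x: "x \<in> to_real2 ` gens p" and y: "y \<in> to_real2 ` gens p" and det: "det2 x y = 0" for x y
  proof -
    obtain a b c d where "(a, b) \<in> gens p" "(c, d) \<in> gens p"
      and xy: "x = to_real2 (a, b)" "y = to_real2 (c, d)"
      using x y by auto
    moreover have "a * d - b * c = 0"
      using det unfolding xy det2_to_real2 by linarith
    ultimately show "x = y"
      using gens_det_eq_0_imp_eq by blast
  qed
qed

theorem proposition4p3:
  fixes p :: nat
  assumes "p \<ge> 1"
  shows "m2 p = 8 * (\<Sum>j=1..p. totient j)"
proof -
  interpret plane_generators "to_real2 ` gens p"
    using plane_generators_gens[OF assms] .
  have "H_inf2 p = zonotope (to_real2 ` gens p)"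
    unfolding H_inf2_def zonotope_def
    by (simp add: sum.reindex inj_on_subset[OF inj_to_real2])
  then have "m2 p = 2 * card (to_real2 ` gens p)"
    by (simp add: m2_def card_extreme_points_zonotope)
  also have "card (to_real2 ` gens p) = card (gens p)"
    by (simp add: card_image inj_on_subset[OF inj_to_real2])
  finally show ?thesis
    by (simp add: card_gens)
qed

end
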